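(* Let $n\geq1$. For all $a,r\in\mathbb N$ and all $l\in\mathbb N$ with $l\leq n$, $$\sum_{i=0}^l(-1)^i\binom{l}{i}\sum_{j=0}^{n-l+1}(-1)^{n-l+1+j}\binom{n-l+1}{j}\overline{(r+i+j,\,a+r+j)}=\bar0.$$
   Context: $\Lambda_{2,n}=\{\alpha\in\mathbb N^2:1\leq\alpha_1+\alpha_2\leq n\}$, $\lambda_{2,n}=|\Lambda_{2,n}|$, and for $v\in\mathbb N^2$, $\bar v=\big(\binom{v_1}{\alpha_1}\binom{v_2}{\alpha_2}\big)_{\alpha\in\Lambda_{2,n}}\in\mathbb C^{\lambda_{2,n}}$; $\bar0$ is the zero vector. *)

theory Defs
  imports Complex_Main "HOL-Library.Function_Algebras"
begin

definition Lambda2 :: "nat \<Rightarrow> (nat \<times> nat) set" where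
  "Lambda2 n = {\<alpha>. 1 \<le> fst \<alpha> + snd \<alpha> \<and> fst \<alpha> + snd \<alpha> \<le> n}"

text \<open>The vector bar v in C^{Lambda_{2,n}}, represented as a function on N^2
  which is zero outside Lambda_{2,n}; the zero vector is the constant 0 function.\<close>
definition vbar :: "nat \<Rightarrow> nat \<times> nat \<Rightarrow> (nat \<times> nat \<Rightarrow> complex)" where
  "vbar n v = (\<lambda>\<alpha>. if \<alpha> \<in> Lambda2 n
      then of_nat (fst v choose fst \<alpha>) * of_nat (snd v choose snd \<alpha>) else 0)"

end

theory Submission
  imports Defs "HOL-Computational_Algebra.Polynomial"
begin

text \<open>Let \<open>\<Delta>\<close> send a polynomial \<open>p\<close> to \<open>x \<mapsto> p x - p (x + 1)\<close>; then
  \<open>\<Delta>\<^sup>m p x = \<Sum>\<^sub>i (-1)\<^sup>i (m choose i) p (x + i)\<close>, and \<open>\<Delta>\<close> kills constants and lowers every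
  other degree. At \<open>\<alpha> = (u, v)\<close>, with \<open>m = n - l + 1\<close> and the two sums exchanged, the sum
  over \<open>i\<close> is \<open>Q j\<close> for \<open>Q = \<Delta>\<^sup>l (x \<mapsto> (r + x choose u))\<close>, so \<open>Q\<close> is zero or of degree
  \<open>\<le> u - l\<close>. Times \<open>j \<mapsto> (a + r + j choose v)\<close> it gives a polynomial of degree
  \<open>\<le> u + v - l < m\<close>, and the sum over \<open>j\<close> is its \<open>m\<close>-th difference at \<open>0\<close>, which vanishes.\<close>

lemma sum_apply: "sum f A x = (\<Sum>a\<in>A. f a x)"
  by (induction A rule: infinite_finite_induct) auto

lemma alternating_binomial_sum_Suc:
  fixes g :: "nat \<Rightarrow> 'a::comm_ring_1"
  shows "(\<Sum>i\<le>Suc m. (-1)^i * of_nat (Suc m choose i) * g i)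
       = (\<Sum>i\<le>m. (-1)^i * of_nat (m choose i) * (g i - g (Suc i)))"
proof -
  have "(\<Sum>i\<le>Suc m. (-1)^i * of_nat (Suc m choose i) * g i)
      = g 0 - (\<Sum>i\<le>m. (-1)^i * of_nat (m choose i) * g (Suc i))
            - (\<Sum>i\<le>m. (-1)^i * of_nat (m choose Suc i) * g (Suc i))"
    by (subst sum.atMost_Suc_shift)
      (simp add: sum_subtractf[symmetric] sum_negf[symmetric] sum.distrib[symmetric] algebra_simps)
  also have "(\<Sum>i\<le>m. (-1)^i * of_nat (m choose Suc i) * g (Suc i))
      = g 0 - (\<Sum>i\<le>Suc m. (-1)^i * of_nat (m choose i) * g i)"
    by (subst sum.atMost_Suc_shift) (simp add: sum_negf[symmetric])
  also have "(\<Sum>i\<le>Suc m. (-1)^i * of_nat (m choose i) * g i)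
      = (\<Sum>i\<le>m. (-1)^i * of_nat (m choose i) * g i)"
    by (simp add: binomial_eq_0)
  finally show ?thesis
    by (simp add: sum_subtractf[symmetric] algebra_simps)
qed

definition shift_diff :: "'a::comm_ring_1 poly \<Rightarrow> 'a poly" where
  "shift_diff p = p - p \<circ>\<^sub>p [:1, 1:]"

lemma poly_shift_diff: "poly (shift_diff p) x = poly p x - poly p (x + 1)"
  by (simp add: shift_diff_def poly_pcompose algebra_simps)

lemma poly_shift_diff_power:
  "poly ((shift_diff ^^ m) p) x = (\<Sum>i\<le>m. (-1)^i * of_nat (m choose i) * poly p (x + of_nat i))"
proof (induction m arbitrary: p)
  case 0
  then show ?case by simp
next
  case (Suc m)
  have "poly ((shift_diff ^^ Suc m) p) x = poly ((shift_diff ^^ m) (shift_diff p)) x"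
    by (simp only: funpow_Suc_right comp_def)
  also have "\<dots> = (\<Sum>i\<le>m. (-1)^i * of_nat (m choose i) *
                    (poly p (x + of_nat i) - poly p (x + of_nat (Suc i))))"
    by (simp add: Suc.IH poly_shift_diff add_ac)
  finally show ?case
    by (simp only: alternating_binomial_sum_Suc[where g = "\<lambda>i. poly p (x + of_nat i)"])
qed

lemma degree_shift_diff_less:
  fixes p :: "'a::idom poly"
  assumes "degree p > 0"
  shows "degree (shift_diff p) < degree p"
proof -
  let ?q = "p \<circ>\<^sub>p [:1, 1:]"
  have "degree ?q = degree p"
    by (simp add: degree_pcompose)
  moreover have "lead_coeff ?q = lead_coeff p"
    by (simp add: lead_coeff_comp)
  ultimately have "coeff (shift_diff p) (degree p) = 0" and "degree (shift_diff p) \<le> degree p"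
    by (simp_all add: shift_diff_def degree_diff_le)
  then show ?thesis
    using assms by (metis degree_0 le_neq_implies_less leading_coeff_0_iff)
qed

lemma shift_diff_const: "degree p = 0 \<Longrightarrow> shift_diff p = 0"
  by (auto simp: shift_diff_def elim: degree_eq_zeroE)

lemma degree_shift_diff_power:
  fixes p :: "'a::idom poly"
  shows "(shift_diff ^^ m) p = 0 \<or> degree ((shift_diff ^^ m) p) + m \<le> degree p"
proof (induction m)
  case 0
  then show ?case by simp
next
  case (Suc m)
  let ?q = "(shift_diff ^^ m) p"
  show ?case
  proof (cases "degree ?q = 0")
    case True
    then show ?thesis by (simp add: shift_diff_const)
  next
    case False
    then show ?thesis
      using Suc.IH degree_shift_diff_less[of ?q] by auto
  qed
qed

lemma shift_diff_power_eq_0: "degree p < m \<Longrightarrow> (shift_diff ^^ m) (p :: 'a::idom poly) = 0"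
  using degree_shift_diff_power[of m p] by auto

definition binomial_poly :: "'a::field_char_0 \<Rightarrow> nat \<Rightarrow> 'a poly" where
  "binomial_poly c k = smult (1 / fact k) (\<Prod>i<k. [:c - of_nat i, 1:])"

lemma poly_binomial_poly: "poly (binomial_poly c k) x = (x + c) gchoose k"
  by (simp add: binomial_poly_def gbinomial_prod_rev poly_prod atLeast0LessThan algebra_simps)

lemma degree_binomial_poly: "degree (binomial_poly c k) = k"
  by (simp add: binomial_poly_def degree_prod_eq_sum_degree)

lemma alternating_double_sum_binomial_eq_0:
  assumes "u + v < l + m"
  shows "(\<Sum>i\<le>l. (-1)^i * of_nat (l choose i) *
           (\<Sum>j\<le>m. (-1)^j * of_nat (m choose j) *
              (of_nat ((c + i + j) choose u) * of_nat ((d + j) choose v)))) = (0 :: 'a::field_char_0)"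
proof -
  define Q :: "'a poly" where "Q = (shift_diff ^^ l) (binomial_poly (of_nat c) u)"
  define R where "R = Q * binomial_poly (of_nat d) v"
  have poly_R: "poly R (of_nat j) = (\<Sum>i\<le>l. (-1)^i * of_nat (l choose i) *
      of_nat ((c + i + j) choose u)) * of_nat ((d + j) choose v)" for j
    by (simp add: R_def Q_def poly_shift_diff_power poly_binomial_poly binomial_gbinomial add_ac)
  have "(\<Sum>j\<le>m. (-1)^j * of_nat (m choose j) * poly R (of_nat j)) = 0"
  proof (cases "Q = 0")
    case False
    then have "degree Q + l \<le> u"
      using degree_shift_diff_power[of l "binomial_poly (of_nat c) u :: 'a poly"]
      by (simp add: Q_def degree_binomial_poly)
    then have "degree R < m"
      using assms degree_mult_le[of Q "binomial_poly (of_nat d) v"]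
      by (simp add: R_def degree_binomial_poly)
    then have "poly ((shift_diff ^^ m) R) 0 = 0"
      by (simp add: shift_diff_power_eq_0)
    then show ?thesis
      by (simp add: poly_shift_diff_power)
  qed (simp add: R_def)
  then show ?thesis
    unfolding poly_R sum_distrib_left sum_distrib_right
    by (subst sum.swap) (simp add: mult_ac)
qed

theorem corollary2p13:
  fixes n a r l :: nat
  assumes "n \<ge> 1" and "l \<le> n"
  shows "(\<Sum>i=0..l. (\<lambda>\<alpha>. (-1)^i * of_nat (l choose i)) *
           (\<Sum>j=0..n-l+1. (\<lambda>\<alpha>. (-1)^(n-l+1+j) * of_nat ((n-l+1) choose j)) *
              vbar n (r+i+j, a+r+j))) = (0 :: nat \<times> nat \<Rightarrow> complex)"
proof (rule ext)
  fix \<alpha> :: "nat \<times> nat"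
  obtain u v where \<alpha>: "\<alpha> = (u, v)"
    by fastforce
  define m where "m = n - l + 1"
  show "(\<Sum>i=0..l. (\<lambda>\<alpha>. (-1)^i * of_nat (l choose i)) *
           (\<Sum>j=0..n-l+1. (\<lambda>\<alpha>. (-1)^(n-l+1+j) * of_nat ((n-l+1) choose j)) *
              vbar n (r+i+j, a+r+j))) \<alpha> = 0 \<alpha>"
  proof (cases "\<alpha> \<in> Lambda2 n")
    case False
    then show ?thesis
      by (simp add: sum_apply vbar_def)
  next
    case True
    then have "u + v < l + m"
      using assms(2) by (simp add: \<alpha> m_def Lambda2_def)
    moreover have "(\<Sum>i=0..l. (\<lambda>\<alpha>. (-1)^i * of_nat (l choose i)) *
           (\<Sum>j=0..n-l+1. (\<lambda>\<alpha>. (-1)^(n-l+1+j) * of_nat ((n-l+1) choose j)) *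
              vbar n (r+i+j, a+r+j))) \<alpha>
      = (-1)^m * (\<Sum>i\<le>l. (-1)^i * of_nat (l choose i) *
           (\<Sum>j\<le>m. (-1)^j * of_nat (m choose j) *
              (of_nat ((r + i + j) choose u) * of_nat ((a + r + j) choose v))))"
      using True unfolding m_def[symmetric]
      by (simp add: sum_apply vbar_def \<alpha> atLeast0AtMost sum_distrib_left power_add mult_ac)
    ultimately show ?thesis
      by (simp add: alternating_double_sum_binomial_eq_0)
  qed
qed

end
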